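(* Let $t$ be an $\mathrm{SL}_2$-tiling and $i<j$ integers. Then $c_{ij}$ and $d_{ij}$ are positive integers.
   Context: An $\mathrm{SL}_2$-tiling is a map $t:\mathbb{Z}\times\mathbb{Z}\to\{1,2,3,\dots\}$, $(i,j)\mapsto t_{ij}$, with $t_{ij}t_{i+1,j+1}-t_{i,j+1}t_{i+1,j}=1$ for all $i,j$. For integers $i<j$ and any integer $a$ put $c_{ij}=t_{ia}t_{j,a+1}-t_{i,a+1}t_{ja}$ and $d_{ij}=t_{ai}t_{a+1,j}-t_{aj}t_{a+1,i}$; these values do not depend on the choice of $a$ (a known fact about $\mathrm{SL}_2$-tilings). *)

theory Defs
  imports Main
begin

definition SL2_tiling :: "(int \<Rightarrow> int \<Rightarrow> int) \<Rightarrow> bool" where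
  "SL2_tiling t \<longleftrightarrow> (\<forall>i j. t i j \<ge> 1) \<and>
     (\<forall>i j. t i j * t (i+1) (j+1) - t i (j+1) * t (i+1) j = 1)"

(* c_ij computed using the column pair (a, a+1) *)
definition cval :: "(int \<Rightarrow> int \<Rightarrow> int) \<Rightarrow> int \<Rightarrow> int \<Rightarrow> int \<Rightarrow> int" where
  "cval t a i j = t i a * t j (a+1) - t i (a+1) * t j a"

(* d_ij computed using the row pair (a, a+1) *)
definition dval :: "(int \<Rightarrow> int \<Rightarrow> int) \<Rightarrow> int \<Rightarrow> int \<Rightarrow> int \<Rightarrow> int" where
  "dval t a i j = t a i * t (a+1) j - t a j * t (a+1) i"

end

theory Submission
  imports Defs
begin

text \<open>Each column (and each row) of a tiling is a sequence of positive integers, and the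
  unimodular relation between two adjacent columns says that the ratio of their entries is
  strictly increasing down the rows. Hence every 2x2 minor taken from two adjacent columns
  (or rows), with rows (columns) in increasing order, is positive.\<close>

lemma cross_product_less_of_adjacent:
  fixes f g :: "int \<Rightarrow> 'a::linordered_idom"
  assumes f_pos: "\<And>k. f k > 0"
    and adjacent: "\<And>k. g k * f (k + 1) < f k * g (k + 1)"
    and "i < j"
  shows "g i * f j < f i * g j"
  using \<open>i < j\<close>
proof (induction j rule: int_gr_induct)
  case base
  show ?case by (rule adjacent)
next
  case (step j)
  have "f j * (g i * f (j + 1)) = (g i * f j) * f (j + 1)"
    by (simp add: algebra_simps)
  also have "\<dots> < (f i * g j) * f (j + 1)"
    using step.IH f_pos by (rule mult_strict_right_mono)
  also have "\<dots> = f i * (g j * f (j + 1))"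
    by (simp add: algebra_simps)
  also have "\<dots> < f i * (f j * g (j + 1))"
    using adjacent f_pos by (rule mult_strict_left_mono)
  also have "\<dots> = f j * (f i * g (j + 1))"
    by (simp add: algebra_simps)
  finally show ?case
    using f_pos[of j] by (simp add: mult_less_cancel_left_pos)
qed

lemma SL2_tiling_pos: "SL2_tiling t \<Longrightarrow> t i j > 0"
  unfolding SL2_tiling_def by (auto intro: less_le_trans[of 0 1])

lemma SL2_tiling_det:
  "SL2_tiling t \<Longrightarrow> t i j * t (i + 1) (j + 1) - t i (j + 1) * t (i + 1) j = 1"
  unfolding SL2_tiling_def by blast

theorem proposition5p6:
  fixes t :: "int \<Rightarrow> int \<Rightarrow> int" and i j a :: int
  assumes "SL2_tiling t" and "i < j"
  shows "cval t a i j > 0 \<and> dval t a i j > 0"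
proof
  have det: "\<And>x y. t x (y + 1) * t (x + 1) y < t x y * t (x + 1) (y + 1)"
    using SL2_tiling_det[OF assms(1)] by (simp add: algebra_simps)
  have "t i (a + 1) * t j a < t i a * t j (a + 1)"
    by (rule cross_product_less_of_adjacent[of "\<lambda>k. t k a" "\<lambda>k. t k (a + 1)"])
      (use SL2_tiling_pos[OF assms(1)] det assms(2) in \<open>simp_all add: mult.commute\<close>)
  then show "cval t a i j > 0"
    unfolding cval_def by simp
  have "t (a + 1) i * t a j < t a i * t (a + 1) j"
    by (rule cross_product_less_of_adjacent[of "\<lambda>k. t a k" "\<lambda>k. t (a + 1) k"])
      (use SL2_tiling_pos[OF assms(1)] det assms(2) in \<open>simp_all add: mult.commute\<close>)
  then show "dval t a i j > 0"
    unfolding dval_def by (simp add: mult.commute)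
qed

end
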